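(* Let $\tau\colon k[y]\otimes k[x]\to k[x]\otimes k[y]$ be the twisting map \[\tau(y^m\otimes x^n)=\sum_{i=0}^n\binom{n}{i}\frac{(m+n-i-1)!}{(m-1)!}\,x^i\otimes y^{m+n-i},\] so that $k[x]\otimes_\tau k[y]$ is the Jordan plane $J=k\langle x,y\mid yx-xy=y^2\rangle$. Then $\tau$ is continuous as a map $k[y]\otimes^!k[x]\to k[x]\otimes^!k[y]$ (for the cofinite topologies on $k[x]$ and $k[y]$) if and only if $k$ has positive characteristic.
   Context: $k$ is a field with the discrete topology; the integer $\frac{(m+n-i-1)!}{(m-1)!}$ is interpreted in $k$ (with $y^0\otimes x^n\mapsto x^n\otimes 1$, i.e. $\tau$ restricts to the swap on $1\otimes k[x]$). For an algebra $R$, the cofinite topology is the linear topology whose open subspaces are those containing a two-sided ideal of finite codimension. For linearly topologized spaces $E,F$, $E\otimes^!F$ is $E\otimes F$ with the linear topology whose open subspaces contain $E_0\otimes F+E\otimes F_0$ for some open subspaces $E_0\subseteq E$, $F_0\subseteq F$. $k[x]\otimes_\tau k[y]$ is $k[x]\otimes k[y]$ with multiplication $(m\otimes m)\circ(\mathrm{id}\otimes\tau\otimes\mathrm{id})$. *)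

theory Defs
  imports "HOL-Analysis.Abstract_Topology" "HOL-Computational_Algebra.Polynomial"
begin

definition ksub :: "('a \<Rightarrow> 'v \<Rightarrow> 'v) \<Rightarrow> 'v::ab_group_add set \<Rightarrow> bool" where
  "ksub sc S \<longleftrightarrow> 0 \<in> S \<and> (\<forall>u\<in>S. \<forall>v\<in>S. u + v \<in> S) \<and> (\<forall>c u. u \<in> S \<longrightarrow> sc c u \<in> S)"

definition kspan :: "('a \<Rightarrow> 'v \<Rightarrow> 'v) \<Rightarrow> 'v::ab_group_add set \<Rightarrow> 'v set" where
  "kspan sc S = \<Inter>{T. ksub sc T \<and> S \<subseteq> T}"

definition two_sided_ideal :: "'r::ring set \<Rightarrow> bool" where
  "two_sided_ideal I \<longleftrightarrow> 0 \<in> I \<and> (\<forall>a\<in>I. \<forall>b\<in>I. a + b \<in> I) \<and> (\<forall>a\<in>I. - a \<in> I)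
     \<and> (\<forall>a\<in>I. \<forall>r. r * a \<in> I \<and> a * r \<in> I)"

definition fin_codim :: "('a \<Rightarrow> 'v \<Rightarrow> 'v) \<Rightarrow> 'v::ab_group_add set \<Rightarrow> bool" where
  "fin_codim sc W \<longleftrightarrow> (\<exists>B. finite B \<and> kspan sc (B \<union> W) = UNIV)"

definition cofinite_open :: "'a::field poly set \<Rightarrow> bool" where
  "cofinite_open U \<longleftrightarrow> ksub smult U \<and>
     (\<exists>I. two_sided_ideal I \<and> fin_codim smult I \<and> I \<subseteq> U)"

text \<open>The tensor product k[s] \<otimes> k[t] is represented by 'a poly poly: the outer
  variable is the first tensor factor, the coefficients (polynomials) the second factor;
  so s^i \<otimes> t^j corresponds to monom (monom 1 j) i.\<close>
definition tsc :: "'a::field \<Rightarrow> 'a poly poly \<Rightarrow> 'a poly poly" where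
  "tsc c t = smult [:c:] t"

definition tens :: "'a::field poly \<Rightarrow> 'a poly \<Rightarrow> 'a poly poly" where
  "tens p q = map_poly (\<lambda>c. smult c q) p"

text \<open>Open subspaces of E \<otimes>^! F, given the open subspaces OE of E and OF of F.\<close>
definition bang_open :: "('a::field poly set \<Rightarrow> bool) \<Rightarrow> ('a poly set \<Rightarrow> bool) \<Rightarrow> 'a poly poly set \<Rightarrow> bool" where
  "bang_open OE OF U \<longleftrightarrow> ksub tsc U \<and>
     (\<exists>E0 F0. OE E0 \<and> OF F0 \<and>
        kspan tsc ((\<lambda>(e, f). tens e f) ` (E0 \<times> UNIV \<union> UNIV \<times> F0)) \<subseteq> U)"

definition linear_topology :: "('v::ab_group_add set \<Rightarrow> bool) \<Rightarrow> 'v topology" where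
  "linear_topology OP = topology (\<lambda>S. \<forall>v\<in>S. \<exists>U. OP U \<and> (\<lambda>u. v + u) ` U \<subseteq> S)"

definition tau_coeff :: "nat \<Rightarrow> nat \<Rightarrow> nat \<Rightarrow> 'a::field" where
  "tau_coeff m n i = (if m = 0 then (if i = n then 1 else 0)
      else of_nat (n choose i) * of_nat (fact (m + n - i - 1) div fact (m - 1) :: nat))"

definition tau_basis :: "nat \<Rightarrow> nat \<Rightarrow> 'a::field poly poly" where
  "tau_basis m n = (\<Sum>i\<le>n. monom (monom (tau_coeff m n i) (m + n - i)) i)"

definition tau :: "'a::field poly poly \<Rightarrow> 'a poly poly" where
  "tau t = (\<Sum>m\<le>degree t. \<Sum>n\<le>degree (coeff t m).
              smult [:coeff (coeff t m) n:] (tau_basis m n))"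

end

theory Submission
  imports Defs
begin

(* Let D = y\<^sup>2 d/dy on k[y] and let H\<^sub>k be the k-th Hasse derivative on k[x], sending x^n to
  (n choose k) x^(n-k). As D^k y^m = m (m+1) ... (m+k-1) y^(m+k), the twisting map is
  \<tau>(b \<otimes> a) = \<Sum>\<^sub>k H\<^sub>k a \<otimes> D^k b. The open subspaces of k[s] \<otimes>\<^sup>! k[t] are the subspaces containing
  some f k[s] \<otimes> k[t] + k[s] \<otimes> g k[t] with f, g \<noteq> 0, and \<tau> is linear; so \<tau> is continuous iff for
  all f, g \<noteq> 0 there are F, G \<noteq> 0 with
  \<tau>(F k[y] \<otimes> k[x] + k[y] \<otimes> G k[x]) \<subseteq> f k[x] \<otimes> k[y] + k[x] \<otimes> g k[y].

  In characteristic p > 0 take F = g^p and G = f^p: D commutes with multiplication by p-th powers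
  and D^p = 0 (a product of p consecutive integers vanishes mod p), while for k < p the Hasse
  derivative H\<^sub>k = (d/dx)^k / k! also commutes with multiplication by p-th powers.

  In characteristic 0 the x^0-component of \<tau>(F \<otimes> x^n) is D^n F. If it vanished at y = 1 for all n,
  then (y - 1)^k would divide F for every k, because D lowers the order of vanishing at 1 by exactly
  one. Hence no F \<noteq> 0 is mapped into the open subspace x k[x] \<otimes> k[y] + k[x] \<otimes> (y - 1) k[y]. *)

lemma ksub_kspan: "ksub sc (kspan sc S)"
  unfolding ksub_def kspan_def by auto

lemma kspan_superset: "S \<subseteq> kspan sc S"
  unfolding kspan_def by auto

lemma kspan_least: "ksub sc T \<Longrightarrow> S \<subseteq> T \<Longrightarrow> kspan sc S \<subseteq> T"
  unfolding kspan_def by auto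

lemma kspan_subset_iff: "ksub sc T \<Longrightarrow> kspan sc S \<subseteq> T \<longleftrightarrow> S \<subseteq> T"
  using kspan_least kspan_superset by blast

lemma ksub_zero: "ksub sc T \<Longrightarrow> 0 \<in> T"
  unfolding ksub_def by blast

lemma ksub_add: "ksub sc T \<Longrightarrow> u \<in> T \<Longrightarrow> v \<in> T \<Longrightarrow> u + v \<in> T"
  unfolding ksub_def by blast

lemma ksub_scale: "ksub sc T \<Longrightarrow> u \<in> T \<Longrightarrow> sc c u \<in> T"
  unfolding ksub_def by blast

lemma ksub_sum: "ksub sc T \<Longrightarrow> (\<And>i. i \<in> A \<Longrightarrow> f i \<in> T) \<Longrightarrow> sum f A \<in> T"
  by (induction A rule: infinite_finite_induct) (auto simp: ksub_def)

lemma ksub_Int: "ksub sc S \<Longrightarrow> ksub sc T \<Longrightarrow> ksub sc (S \<inter> T)"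
  by (simp add: ksub_def)

lemma ksub_vimage:
  assumes "ksub sc' T" "additive F" "\<And>c u. F (sc c u) = sc' c (F u)"
  shows "ksub sc (F -` T)"
  using assms additive.add[OF assms(2)] additive.zero[OF assms(2)] by (auto simp: ksub_def)

section \<open>The cofinite topology on k[t]\<close>

lemma ksub_multiples: "ksub smult (range ((*) (f :: 'a::comm_ring_1 poly)))"
  unfolding ksub_def
  by (auto simp: distrib_left
      intro: range_eqI[of _ _ 0] range_eqI[of _ _ "_ + _"] range_eqI[of _ _ "smult _ _"])

lemma two_sided_ideal_multiples: "two_sided_ideal (range ((*) (f :: 'r::comm_ring)))"
  unfolding two_sided_ideal_def
proof (intro conjI ballI allI)
  fix u v r assume "u \<in> range ((*) f)" "v \<in> range ((*) f)"
  then obtain a b where "u = f * a" "v = f * b" by blast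
  then have "u + v = f * (a + b)" "- u = f * - a" "r * u = f * (r * a)" "u * r = f * (a * r)"
    by (simp_all add: algebra_simps)
  then show "u + v \<in> range ((*) f)" "- u \<in> range ((*) f)" "r * u \<in> range ((*) f)"
    "u * r \<in> range ((*) f)"
    by (metis rangeI)+
qed (metis rangeI mult_zero_right)

lemma fin_codim_multiples:
  fixes f :: "'a::field poly"
  assumes "f \<noteq> 0"
  shows "fin_codim smult (range ((*) f))"
proof -
  let ?B = "(\<lambda>i. monom (1::'a) i) ` {..<degree f}"
  let ?T = "kspan smult (?B \<union> range ((*) f))"
  have T: "ksub smult ?T" by (rule ksub_kspan)
  have "p \<in> ?T" for p
  proof -
    have "degree (p mod f) < degree f \<or> p mod f = 0"
      using degree_mod_less'[OF assms] by blast
    then have "p mod f = (\<Sum>i<degree f. smult (coeff (p mod f) i) (monom 1 i))"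
      by (intro poly_eqI) (auto simp: coeff_sum smult_monom coeff_eq_0 not_less)
    also have "\<dots> \<in> ?T"
      using kspan_superset[of "?B \<union> range ((*) f)" smult]
      by (intro ksub_sum[OF T] ksub_scale[OF T]) auto
    finally have "p mod f \<in> ?T" .
    moreover have "f * (p div f) \<in> ?T"
      using kspan_superset[of "?B \<union> range ((*) f)" smult] by blast
    ultimately have "p mod f + f * (p div f) \<in> ?T" by (rule ksub_add[OF T])
    then show ?thesis by (simp add: add.commute)
  qed
  then show ?thesis unfolding fin_codim_def by blast
qed

lemma fin_codim_poly_imp_nonzero:
  fixes I :: "'a::field poly set"
  assumes "fin_codim smult I"
  shows "\<exists>f\<in>I. f \<noteq> 0"
proof (rule ccontr)
  assume "\<not> ?thesis"
  then have "I \<subseteq> {0}" by auto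
  obtain B where B: "finite B" "kspan smult (B \<union> I) = UNIV"
    using assms unfolding fin_codim_def by blast
  define N where "N = Max (degree ` B)"
  let ?T = "{p :: 'a poly. degree p \<le> N}"
  have "ksub smult ?T"
    using degree_add_le degree_smult_le order_trans unfolding ksub_def by fastforce
  moreover have "B \<union> I \<subseteq> ?T"
    using B(1) \<open>I \<subseteq> {0}\<close> unfolding N_def by auto
  ultimately have "kspan smult (B \<union> I) \<subseteq> ?T" by (rule kspan_least)
  with B have "monom (1::'a) (Suc N) \<in> ?T" by blast
  then show False by (simp add: degree_monom_eq)
qed

lemma cofinite_open_iff:
  "cofinite_open (E :: 'a::field poly set) \<longleftrightarrow> ksub smult E \<and> (\<exists>f. f \<noteq> 0 \<and> range ((*) f) \<subseteq> E)"
proof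
  assume "cofinite_open E"
  then obtain I where I: "ksub smult E" "two_sided_ideal I" "fin_codim smult I" "I \<subseteq> E"
    unfolding cofinite_open_def by blast
  obtain f where "f \<in> I" "f \<noteq> 0" using fin_codim_poly_imp_nonzero[OF I(3)] by blast
  moreover have "range ((*) f) \<subseteq> I"
    using I(2) \<open>f \<in> I\<close> unfolding two_sided_ideal_def by (auto simp: mult.commute)
  ultimately show "ksub smult E \<and> (\<exists>f. f \<noteq> 0 \<and> range ((*) f) \<subseteq> E)"
    using I(1,4) by blast
next
  assume "ksub smult E \<and> (\<exists>f. f \<noteq> 0 \<and> range ((*) f) \<subseteq> E)"
  then show "cofinite_open E"
    unfolding cofinite_open_def using two_sided_ideal_multiples fin_codim_multiples by blast
qed

section \<open>Linear topologies\<close>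

lemma openin_linear_topology:
  assumes Int: "\<And>U V. OP U \<Longrightarrow> OP V \<Longrightarrow> OP (U \<inter> V)"
  shows "openin (linear_topology OP) S \<longleftrightarrow> (\<forall>v\<in>S. \<exists>U. OP U \<and> (\<lambda>u. v + u) ` U \<subseteq> S)"
proof -
  have "istopology (\<lambda>S. \<forall>v\<in>S. \<exists>U. OP U \<and> (\<lambda>u. v + u) ` U \<subseteq> S)"
    unfolding istopology_def
  proof (intro conjI allI impI ballI)
    fix S T v
    assume S: "\<forall>v\<in>S. \<exists>U. OP U \<and> (\<lambda>u. v + u) ` U \<subseteq> S"
      and T: "\<forall>v\<in>T. \<exists>U. OP U \<and> (\<lambda>u. v + u) ` U \<subseteq> T"
      and v: "v \<in> S \<inter> T"
    obtain U where "OP U" "(\<lambda>u. v + u) ` U \<subseteq> S" using S v by blast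
    moreover obtain V where "OP V" "(\<lambda>u. v + u) ` V \<subseteq> T" using T v by blast
    ultimately have "OP (U \<inter> V) \<and> (\<lambda>u. v + u) ` (U \<inter> V) \<subseteq> S \<inter> T"
      using Int by blast
    then show "\<exists>W. OP W \<and> (\<lambda>u. v + u) ` W \<subseteq> S \<inter> T" ..
  next
    fix K v
    assume K: "\<forall>S\<in>K. \<forall>v\<in>S. \<exists>U. OP U \<and> (\<lambda>u. v + u) ` U \<subseteq> S"
      and "v \<in> \<Union>K"
    then obtain S where "S \<in> K" "v \<in> S" by blast
    with K obtain U where "OP U" "(\<lambda>u. v + u) ` U \<subseteq> S" by blast
    then show "\<exists>U. OP U \<and> (\<lambda>u. v + u) ` U \<subseteq> \<Union>K"
      using \<open>S \<in> K\<close> by blast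
  qed
  then show ?thesis
    unfolding linear_topology_def by (simp only: topology_inverse')
qed

lemma topspace_linear_topology:
  assumes "\<And>U V. OP U \<Longrightarrow> OP V \<Longrightarrow> OP (U \<inter> V)" "OP A"
  shows "topspace (linear_topology OP) = UNIV"
proof -
  have "openin (linear_topology OP) UNIV"
    using assms by (auto simp only: openin_linear_topology subset_UNIV)
  then show ?thesis
    using openin_subset by blast
qed

lemma continuous_map_linear_topology_iff:
  fixes F :: "'v::ab_group_add \<Rightarrow> 'w::ab_group_add"
  assumes F: "additive F"
    and OP: "\<And>U V. OP U \<Longrightarrow> OP V \<Longrightarrow> OP (U \<inter> V)" "OP A"
    and OQ: "\<And>U V. OQ U \<Longrightarrow> OQ V \<Longrightarrow> OQ (U \<inter> V)" "OQ B"
    and OQ_subgroup: "\<And>U. OQ U \<Longrightarrow> 0 \<in> U \<and> (\<forall>u\<in>U. \<forall>v\<in>U. u + v \<in> U)"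
  shows "continuous_map (linear_topology OP) (linear_topology OQ) F \<longleftrightarrow>
         (\<forall>U. OQ U \<longrightarrow> (\<exists>V. OP V \<and> F ` V \<subseteq> U))"
proof -
  have openin_OP: "openin (linear_topology OP) S \<longleftrightarrow> (\<forall>v\<in>S. \<exists>U. OP U \<and> (\<lambda>u. v + u) ` U \<subseteq> S)"
    for S by (rule openin_linear_topology, fact OP(1))
  have openin_OQ: "openin (linear_topology OQ) S \<longleftrightarrow> (\<forall>v\<in>S. \<exists>U. OQ U \<and> (\<lambda>u. v + u) ` U \<subseteq> S)"
    for S by (rule openin_linear_topology, fact OQ(1))
  have "topspace (linear_topology OP) = UNIV" "topspace (linear_topology OQ) = UNIV"
    by (rule topspace_linear_topology, fact OP(1), fact OP(2))
      (rule topspace_linear_topology, fact OQ(1), fact OQ(2))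
  then have cont_iff: "continuous_map (linear_topology OP) (linear_topology OQ) F \<longleftrightarrow>
      (\<forall>S. openin (linear_topology OQ) S \<longrightarrow> openin (linear_topology OP) (F -` S))"
    by (simp add: continuous_map_def vimage_def)
  show ?thesis
    unfolding cont_iff
  proof (intro iffI allI impI)
    fix U assume cont: "\<forall>S. openin (linear_topology OQ) S \<longrightarrow> openin (linear_topology OP) (F -` S)"
      and "OQ U"
    have "openin (linear_topology OQ) U"
      unfolding openin_OQ using \<open>OQ U\<close> OQ_subgroup[OF \<open>OQ U\<close>] by blast
    then have "openin (linear_topology OP) (F -` U)"
      using cont by blast
    moreover have "0 \<in> F -` U"
      using OQ_subgroup[OF \<open>OQ U\<close>] additive.zero[OF F] by simp
    ultimately obtain V where "OP V" "(\<lambda>u. 0 + u) ` V \<subseteq> F -` U"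
      unfolding openin_OP by blast
    then show "\<exists>V. OP V \<and> F ` V \<subseteq> U" by auto
  next
    fix S assume cont0: "\<forall>U. OQ U \<longrightarrow> (\<exists>V. OP V \<and> F ` V \<subseteq> U)"
      and S: "openin (linear_topology OQ) S"
    have "\<exists>V. OP V \<and> (\<lambda>u. v + u) ` V \<subseteq> F -` S" if "v \<in> F -` S" for v
    proof -
      have "F v \<in> S" using that by simp
      then obtain U where "OQ U" "(\<lambda>u. F v + u) ` U \<subseteq> S"
        using S unfolding openin_OQ by blast
      moreover obtain V where "OP V" "F ` V \<subseteq> U"
        using cont0 \<open>OQ U\<close> by blast
      ultimately show ?thesis
        using additive.add[OF F, of v] by blast
    qed
    then show "openin (linear_topology OP) (F -` S)"
      unfolding openin_OP by blast
  qed
qed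

section \<open>Open subspaces of tensor products\<close>

lemma smult_sum_right: "smult c (sum f A) = (\<Sum>i\<in>A. smult c (f i))"
  by (induction A rule: infinite_finite_induct) (simp_all add: smult_add_right)

lemma coeff_tens: "coeff (tens p q) i = smult (coeff p i) q"
  unfolding tens_def by (simp add: coeff_map_poly)

lemma degree_tens_le: "degree (tens p q) \<le> degree p"
  unfolding tens_def by (rule map_poly_degree_leq)

lemma tens_monom: "tens (monom a i) (monom b j) = monom (monom (a * b) j) i"
  by (rule poly_eqI) (simp add: coeff_tens smult_monom)

lemma tens_zero_left [simp]: "tens 0 q = 0"
  by (simp add: tens_def)

lemma tens_zero_right [simp]: "tens p 0 = 0"
  by (rule poly_eqI) (simp add: coeff_tens)

lemma tens_sum_left: "tens (sum f A) q = (\<Sum>i\<in>A. tens (f i) q)"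
  by (rule poly_eqI) (simp add: coeff_tens coeff_sum smult_sum)

lemma additive_tens_right: "additive (tens p)"
  by unfold_locales (rule poly_eqI, simp add: coeff_tens smult_add_right)

lemmas tens_sum_right = additive.sum[OF additive_tens_right]

lemma bang_open_iff:
  "bang_open OE OF U \<longleftrightarrow> ksub tsc U \<and>
     (\<exists>E0 F0. OE E0 \<and> OF F0 \<and> (\<forall>e\<in>E0. \<forall>q. tens e q \<in> U) \<and> (\<forall>p. \<forall>f\<in>F0. tens p f \<in> U))"
proof (cases "ksub tsc U")
  case True
  have "(\<lambda>(e, f). tens e f) ` (E0 \<times> UNIV \<union> UNIV \<times> F0) \<subseteq> U \<longleftrightarrow>
      (\<forall>e\<in>E0. \<forall>q. tens e q \<in> U) \<and> (\<forall>p. \<forall>f\<in>F0. tens p f \<in> U)" for E0 F0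
    by (simp add: image_subset_iff ball_Un split_paired_Ball_Sigma)
  then show ?thesis
    unfolding bang_open_def kspan_subset_iff[OF True] by simp
qed (simp add: bang_open_def)

abbreviation cofinite_bang_open :: "'a::field poly poly set \<Rightarrow> bool" where
  "cofinite_bang_open \<equiv> bang_open cofinite_open cofinite_open"

lemma cofinite_bang_open_iff:
  "cofinite_bang_open U \<longleftrightarrow> ksub tsc U \<and>
     (\<exists>f g. f \<noteq> 0 \<and> g \<noteq> 0 \<and> (\<forall>h q. tens (f * h) q \<in> U) \<and> (\<forall>p h. tens p (g * h) \<in> U))"
  (is "_ \<longleftrightarrow> ksub tsc U \<and> (\<exists>f g. ?gen f g)")
proof
  assume "cofinite_bang_open U"
  then obtain E0 F0 where U: "ksub tsc U" "cofinite_open E0" "cofinite_open F0"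
    "\<forall>e\<in>E0. \<forall>q. tens e q \<in> U" "\<forall>p. \<forall>f\<in>F0. tens p f \<in> U"
    unfolding bang_open_iff by blast
  obtain f g where "f \<noteq> 0" "range ((*) f) \<subseteq> E0" "g \<noteq> 0" "range ((*) g) \<subseteq> F0"
    using U(2,3) unfolding cofinite_open_iff by blast
  with U(1,4,5) show "ksub tsc U \<and> (\<exists>f g. ?gen f g)" by blast
next
  assume "ksub tsc U \<and> (\<exists>f g. ?gen f g)"
  then obtain f g where "ksub tsc U" "?gen f g" by blast
  moreover have "cofinite_open (range ((*) f))" "cofinite_open (range ((*) g))"
    using \<open>?gen f g\<close> ksub_multiples by (auto simp: cofinite_open_iff)
  ultimately show "cofinite_bang_open U"
    unfolding bang_open_iff by blast
qed

lemma cofinite_bang_open_Int: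
  assumes "cofinite_bang_open U" "cofinite_bang_open V"
  shows "cofinite_bang_open (U \<inter> V)"
proof -
  obtain f1 g1 where U: "ksub tsc U" "f1 \<noteq> 0" "g1 \<noteq> 0"
    "\<forall>h q. tens (f1 * h) q \<in> U" "\<forall>p h. tens p (g1 * h) \<in> U"
    using assms(1) unfolding cofinite_bang_open_iff by blast
  obtain f2 g2 where V: "ksub tsc V" "f2 \<noteq> 0" "g2 \<noteq> 0"
    "\<forall>h q. tens (f2 * h) q \<in> V" "\<forall>p h. tens p (g2 * h) \<in> V"
    using assms(2) unfolding cofinite_bang_open_iff by blast
  have "tens (f1 * f2 * h) q \<in> U \<inter> V" for h q
    using U(4)[rule_format, of "f2 * h" q] V(4)[rule_format, of "f1 * h" q]
    by (simp add: ac_simps)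
  moreover have "tens p (g1 * g2 * h) \<in> U \<inter> V" for p h
    using U(5)[rule_format, of p "g2 * h"] V(5)[rule_format, of p "g1 * h"]
    by (simp add: ac_simps)
  ultimately show ?thesis
    unfolding cofinite_bang_open_iff using U(1-3) V(1-3) ksub_Int[OF U(1) V(1)]
    by (metis mult_eq_0_iff)
qed

lemma cofinite_bang_open_UNIV: "cofinite_bang_open (UNIV :: 'a::field poly poly set)"
  unfolding cofinite_bang_open_iff by (auto simp: ksub_def intro: exI[of _ 1])

section \<open>The twisting map\<close>

lemma coeff_degree_bounded: "\<exists>N. \<forall>m. degree (coeff (t :: 'a::zero poly poly) m) \<le> N"
proof (intro exI allI)
  fix m
  show "degree (coeff t m) \<le> Max ((\<lambda>m. degree (coeff t m)) ` {..degree t})"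
  proof (cases "m \<le> degree t")
    case False
    then show ?thesis by (simp add: coeff_eq_0)
  qed (simp add: Max_ge)
qed

lemma tau_eq_sum:
  fixes t :: "'a::field poly poly"
  assumes "degree t \<le> M" and "\<And>m. degree (coeff t m) \<le> N"
  shows "tau t = (\<Sum>m\<le>M. \<Sum>n\<le>N. smult [:coeff (coeff t m) n:] (tau_basis m n))"
proof -
  have "tau t = (\<Sum>m\<le>degree t. \<Sum>n\<le>N. smult [:coeff (coeff t m) n:] (tau_basis m n))"
    unfolding tau_def using assms(2)
    by (intro sum.cong refl sum.mono_neutral_left) (auto simp: coeff_eq_0)
  also have "\<dots> = (\<Sum>m\<le>M. \<Sum>n\<le>N. smult [:coeff (coeff t m) n:] (tau_basis m n))"
    using assms(1) by (intro sum.mono_neutral_left) (auto simp: coeff_eq_0)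
  finally show ?thesis .
qed

lemma additive_tau: "additive (tau :: 'a::field poly poly \<Rightarrow> 'a poly poly)"
proof
  fix s t :: "'a poly poly"
  obtain Ns Nt where Ns: "\<And>m. degree (coeff s m) \<le> Ns" and Nt: "\<And>m. degree (coeff t m) \<le> Nt"
    using coeff_degree_bounded by metis
  let ?M = "degree s + degree t" and ?N = "Ns + Nt"
  have "degree (s + t) \<le> ?M"
    using degree_add_le[of s ?M t] by simp
  moreover have "degree (coeff u m) \<le> ?N" if "u \<in> {s, t, s + t}" for u m
    using that Ns[of m] Nt[of m] degree_add_le[of "coeff s m" ?N "coeff t m"] by auto
  ultimately have "tau u = (\<Sum>m\<le>?M. \<Sum>n\<le>?N. smult [:coeff (coeff u m) n:] (tau_basis m n))"
    if "u \<in> {s, t, s + t}" for u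
    using that by (intro tau_eq_sum) auto
  then show "tau (s + t) = tau s + tau t"
    by (simp add: sum.distrib[symmetric] smult_add_left[symmetric])
qed

lemma tau_tsc: "tau (tsc c t) = tsc c (tau (t :: 'a::field poly poly))"
proof -
  obtain N where N: "\<And>m. degree (coeff t m) \<le> N"
    using coeff_degree_bounded by metis
  have "degree (tsc c t) \<le> degree t" "degree (coeff (tsc c t) m) \<le> N" for m
    using N[of m] unfolding tsc_def by (auto simp: degree_smult_eq)
  then have "tau (tsc c t) =
      (\<Sum>m\<le>degree t. \<Sum>n\<le>N. smult [:coeff (coeff (tsc c t) m) n:] (tau_basis m n))"
    by (rule tau_eq_sum)
  also have "\<dots> = tsc c (\<Sum>m\<le>degree t. \<Sum>n\<le>N. smult [:coeff (coeff t m) n:] (tau_basis m n))"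
    by (simp add: tsc_def smult_sum_right mult.commute)
  also have "\<dots> = tsc c (tau t)"
    using tau_eq_sum[OF order_refl N] by simp
  finally show ?thesis .
qed

definition sq_pderiv :: "'a::idom poly \<Rightarrow> 'a poly" where
  "sq_pderiv p = monom 1 2 * pderiv p"

definition hasse_pderiv :: "nat \<Rightarrow> 'a::comm_semiring_1 poly \<Rightarrow> 'a poly" where
  "hasse_pderiv k p = (\<Sum>n\<le>degree p. monom (coeff p n * of_nat (n choose k)) (n - k))"

lemma additive_sq_pderiv_power: "additive (sq_pderiv ^^ k)"
proof
  show "(sq_pderiv ^^ k) (p + q) = (sq_pderiv ^^ k) p + (sq_pderiv ^^ k) q" for p q :: "'a poly"
    by (induction k) (simp_all add: sq_pderiv_def pderiv_add distrib_left)
qed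

lemma sq_pderiv_power_monom:
  "(sq_pderiv ^^ k) (monom c m) = monom (c * pochhammer (of_nat m) k) (m + k)"
proof (induction k)
  case (Suc k)
  have "sq_pderiv (monom d (m + k)) = monom (of_nat (m + k) * d) (m + Suc k)" for d :: 'a
    by (cases "m + k") (simp_all add: sq_pderiv_def pderiv_monom mult_monom)
  then show ?case
    using Suc by (simp add: pochhammer_rec' algebra_simps)
qed simp

lemma sq_pderiv_power_mult_pderiv_zero:
  assumes "pderiv g = 0"
  shows "(sq_pderiv ^^ k) (g * h) = g * (sq_pderiv ^^ k) h"
  by (induction k) (simp_all add: sq_pderiv_def pderiv_mult assms mult.left_commute)

lemma hasse_pderiv_monom: "hasse_pderiv k (monom c n) = monom (c * of_nat (n choose k)) (n - k)"
proof (cases "c = 0")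
  case False
  then have "hasse_pderiv k (monom c n) =
      (\<Sum>j\<le>n. if j = n then monom (c * of_nat (n choose k)) (n - k) else 0)"
    unfolding hasse_pderiv_def by (intro sum.cong) (auto simp: degree_monom_eq)
  then show ?thesis by simp
qed (simp add: hasse_pderiv_def)

lemma higher_pderiv_monom_choose:
  "(pderiv ^^ k) (monom c n) = monom (c * of_nat (fact k * (n choose k))) (n - k)"
proof (induction k)
  case (Suc k)
  have "(n - k) * (n choose k) = Suc k * (n choose Suc k)"
    using binomial_absorb_comp[of n k] binomial_absorption[of k n] by (simp only:)
  then have "(n - k) * (fact k * (n choose k)) = fact (Suc k) * (n choose Suc k)"
    by (metis fact_Suc mult.assoc mult.left_commute of_nat_id)
  then have "of_nat (n - k) * (c * of_nat (fact k * (n choose k))) =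
      (c * of_nat (fact (Suc k) * (n choose Suc k)) :: 'a)"
    by (metis (no_types, lifting) mult.left_commute of_nat_mult)
  with Suc show ?case
    by (simp add: pderiv_monom)
qed simp

lemma higher_pderiv_eq_hasse_pderiv:
  "(pderiv ^^ k) p = smult (of_nat (fact k)) (hasse_pderiv k p)"
proof -
  have "(pderiv ^^ k) p = (\<Sum>n\<le>degree p. (pderiv ^^ k) (monom (coeff p n) n))"
    by (subst (1) poly_as_sum_of_monoms[of p, symmetric]) (rule higher_pderiv_sum)
  then show ?thesis
    by (simp add: hasse_pderiv_def higher_pderiv_monom_choose smult_sum_right smult_monom
        algebra_simps)
qed

lemma fact_div_fact_eq_pochhammer:
  assumes "m \<ge> 1"
  shows "fact (m + j - 1) div fact (m - 1) = (pochhammer m j :: nat)"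
proof -
  have "(fact (m - 1 + j) :: nat) = pochhammer 1 (m - 1 + j)" by (rule pochhammer_fact)
  also have "\<dots> = pochhammer 1 (m - 1) * pochhammer (1 + of_nat (m - 1)) j"
    by (rule pochhammer_product')
  finally have "fact (m + j - 1) = (fact (m - 1) :: nat) * pochhammer m j"
    using assms by (simp add: pochhammer_fact add.commute)
  then show ?thesis by simp
qed

lemma tau_coeff_eq:
  assumes "i \<le> n"
  shows "tau_coeff m n i = (of_nat (n choose i) * pochhammer (of_nat m) (n - i) :: 'a::field)"
proof (cases "m = 0")
  case False
  then have "fact (m + n - i - 1) div fact (m - 1) = (pochhammer m (n - i) :: nat)"
    using fact_div_fact_eq_pochhammer[of m "n - i"] assms by simp
  then show ?thesis
    using False by (simp add: tau_coeff_def pochhammer_of_nat)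
qed (use assms in \<open>auto simp: tau_coeff_def pochhammer_0_left\<close>)

lemma tau_basis_eq:
  assumes "n \<le> N"
  shows "tau_basis m n =
    (\<Sum>k\<le>N. tens (hasse_pderiv k (monom 1 n)) ((sq_pderiv ^^ k) (monom 1 m)) :: 'a::field poly poly)"
proof -
  have "tau_basis m n = (\<Sum>k\<in>{0..n}. monom (monom (tau_coeff m n (n - k)) (m + k)) (n - k) :: 'a poly poly)"
    unfolding tau_basis_def atMost_atLeast0
    by (subst sum.atLeastAtMost_rev) (auto intro!: sum.cong)
  also have "\<dots> = (\<Sum>k\<le>n. tens (monom (of_nat (n choose k)) (n - k))
                               (monom (pochhammer (of_nat m) k) (m + k)))"
    unfolding atMost_atLeast0
    by (intro sum.cong) (auto simp: tau_coeff_eq tens_monom binomial_symmetric[symmetric])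
  also have "\<dots> = (\<Sum>k\<le>N. tens (monom (of_nat (n choose k)) (n - k))
                               (monom (pochhammer (of_nat m) k) (m + k)))"
    using assms by (intro sum.mono_neutral_left) (auto simp: tens_monom binomial_eq_0)
  finally show ?thesis
    by (simp add: hasse_pderiv_monom sq_pderiv_power_monom)
qed

lemma smult_const_tens: "smult [:c:] (tens p q) = tens (smult c p) q"
  by (rule poly_eqI) (simp add: coeff_tens mult.commute)

lemma tau_tens:
  fixes a b :: "'a::field poly"
  shows "tau (tens b a) = (\<Sum>k\<le>degree a. tens (hasse_pderiv k a) ((sq_pderiv ^^ k) b))"
proof -
  let ?T = "\<lambda>m n k. tens (monom (coeff a n * of_nat (n choose k)) (n - k))
                          ((sq_pderiv ^^ k) (monom (coeff b m) m))"
  have "tau (tens b a) =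
      (\<Sum>m\<le>degree b. \<Sum>n\<le>degree a. smult [:coeff (coeff (tens b a) m) n:] (tau_basis m n))"
    by (rule tau_eq_sum[OF degree_tens_le]) (simp add: coeff_tens degree_smult_le)
  also have "\<dots> = (\<Sum>m\<le>degree b. \<Sum>n\<le>degree a. smult [:coeff b m * coeff a n:] (tau_basis m n))"
    by (simp add: coeff_tens)
  also have "\<dots> = (\<Sum>m\<le>degree b. \<Sum>n\<le>degree a. \<Sum>k\<le>degree a. ?T m n k)"
    by (intro sum.cong refl)
      (simp add: tau_basis_eq smult_sum_right smult_const_tens smult_monom
        hasse_pderiv_monom sq_pderiv_power_monom tens_monom ac_simps)
  also have "\<dots> = (\<Sum>k\<le>degree a. \<Sum>n\<le>degree a. \<Sum>m\<le>degree b. ?T m n k)"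
    by (subst sum.swap) (simp add: sum.swap[of _ "{..degree b}"])
  also have "\<dots> = (\<Sum>k\<le>degree a. tens (hasse_pderiv k a) ((sq_pderiv ^^ k) b))"
    by (simp only: hasse_pderiv_def tens_sum_left tens_sum_right[symmetric]
        additive.sum[OF additive_sq_pderiv_power, symmetric] poly_as_sum_of_monoms)
  finally show ?thesis .
qed

section \<open>Positive characteristic\<close>

lemma of_nat_fact_neq_0_below_CHAR:
  assumes "k < CHAR('a::idom)"
  shows "(of_nat (fact k) :: 'a) \<noteq> 0"
  using assms
proof (induction k)
  case (Suc k)
  have "\<not> CHAR('a) dvd Suc k"
    using Suc.prems by (auto dest: dvd_imp_le)
  then have "(of_nat (Suc k) :: 'a) \<noteq> 0"
    using of_nat_eq_0_iff_char_dvd[of "Suc k", where 'a='a] by blast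
  moreover have "of_nat (fact (Suc k)) = (of_nat (Suc k) * of_nat (fact k) :: 'a)"
    by (simp only: fact_Suc of_nat_mult of_nat_id)
  ultimately show ?case
    using Suc by (simp del: of_nat_Suc)
qed simp

lemma pochhammer_of_nat_eq_0_CHAR:
  assumes "CHAR('a::comm_semiring_1) > 0" and "CHAR('a) \<le> k"
  shows "pochhammer (of_nat m :: 'a) k = 0"
proof -
  let ?p = "CHAR('a)"
  define i where "i = (?p - m mod ?p) mod ?p"
  have "i < k"
    unfolding i_def using assms by (meson mod_less_divisor order_less_le_trans)
  have "(m + i) mod ?p = 0"
    unfolding i_def using assms(1)
    by (metis add_diff_inverse_nat mod_add_left_eq mod_add_right_eq mod_less_divisor mod_self
        not_less_iff_gr_or_eq)
  then have "of_nat m + of_nat i = (0 :: 'a)"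
    by (metis of_nat_add of_nat_eq_0_iff_char_dvd mod_0_imp_dvd)
  then show ?thesis
    unfolding pochhammer_prod using \<open>i < k\<close> by (intro prod_zero) auto
qed

lemma sq_pderiv_power_eq_0:
  assumes "CHAR('a::idom) > 0" and "CHAR('a) \<le> k"
  shows "(sq_pderiv ^^ k) (b :: 'a poly) = 0"
proof -
  have "(sq_pderiv ^^ k) b = (\<Sum>m\<le>degree b. (sq_pderiv ^^ k) (monom (coeff b m) m))"
    by (subst (1) poly_as_sum_of_monoms[of b, symmetric])
      (rule additive.sum[OF additive_sq_pderiv_power])
  then show ?thesis
    by (simp add: sq_pderiv_power_monom pochhammer_of_nat_eq_0_CHAR[OF assms])
qed

lemma pderiv_power_CHAR: "pderiv ((g :: 'a::idom poly) ^ CHAR('a)) = 0"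
  by (simp add: pderiv_power)

lemma higher_pderiv_mult_pderiv_zero:
  assumes "pderiv g = 0"
  shows "(pderiv ^^ k) (g * h) = g * (pderiv ^^ k) h"
  by (induction k) (simp_all add: pderiv_mult assms)

lemma hasse_pderiv_power_CHAR_mult:
  assumes "k < CHAR('a::field)"
  shows "hasse_pderiv k (f ^ CHAR('a) * h) = f ^ CHAR('a) * hasse_pderiv k (h :: 'a poly)"
proof -
  have "smult (of_nat (fact k)) (hasse_pderiv k (f ^ CHAR('a) * h)) =
      smult (of_nat (fact k)) (f ^ CHAR('a) * hasse_pderiv k h)"
    using higher_pderiv_mult_pderiv_zero[OF pderiv_power_CHAR, of k f h]
    by (simp add: higher_pderiv_eq_hasse_pderiv)
  then show ?thesis
    using of_nat_fact_neq_0_below_CHAR[OF assms] by (rule smult_cancel[rotated])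
qed

lemma tau_continuous_at_0_if_CHAR_pos:
  assumes p: "CHAR('a::field) > 0" and U: "cofinite_bang_open (U :: 'a poly poly set)"
  shows "\<exists>V. cofinite_bang_open V \<and> tau ` V \<subseteq> U"
proof -
  let ?p = "CHAR('a)"
  obtain f g where U: "ksub tsc U" "f \<noteq> 0" "g \<noteq> 0"
    "\<forall>h q. tens (f * h) q \<in> U" "\<forall>p h. tens p (g * h) \<in> U"
    using assms(2) unfolding cofinite_bang_open_iff by blast
  \<comment> \<open>The first tensor factor is k[y] in the source of \<open>tau\<close> but k[x] in its target, so g is
    used on the left and f on the right.\<close>
  have power_CHAR: "r ^ ?p = r * r ^ (?p - 1)" for r :: "'a poly"
    using p by (simp add: power_eq_if)
  have "tau (tens (g ^ ?p * h) q) \<in> U" for h q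
    unfolding tau_tens
  proof (rule ksub_sum[OF U(1)])
    fix k
    have "(sq_pderiv ^^ k) (g ^ ?p * h) = g * (g ^ (?p - 1) * (sq_pderiv ^^ k) h)"
      by (simp only: sq_pderiv_power_mult_pderiv_zero[OF pderiv_power_CHAR])
        (simp add: power_CHAR)
    with U(5) show "tens (hasse_pderiv k q) ((sq_pderiv ^^ k) (g ^ ?p * h)) \<in> U"
      by simp
  qed
  moreover have "tau (tens p (f ^ ?p * h)) \<in> U" for p h
    unfolding tau_tens
  proof (rule ksub_sum[OF U(1)])
    fix k
    show "tens (hasse_pderiv k (f ^ ?p * h)) ((sq_pderiv ^^ k) p) \<in> U"
    proof (cases "k < ?p")
      case True
      then have "hasse_pderiv k (f ^ ?p * h) = f * (f ^ (?p - 1) * hasse_pderiv k h)"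
        by (simp only: hasse_pderiv_power_CHAR_mult) (simp add: power_CHAR)
      with U(4) show ?thesis
        by simp
    next
      case False
      then show ?thesis
        using sq_pderiv_power_eq_0[OF p] ksub_zero[OF U(1)] by simp
    qed
  qed
  ultimately have "cofinite_bang_open (tau -` U)"
    unfolding cofinite_bang_open_iff using U(2,3)
    by (intro conjI ksub_vimage[OF U(1) additive_tau] tau_tsc exI[of _ "g ^ ?p"]
        exI[of _ "f ^ ?p"]) auto
  then show ?thesis by blast
qed

section \<open>Characteristic zero\<close>

lemma linear_power_Suc_dvd_if_dvd_sq_pderiv:
  fixes q :: "'a::idom poly"
  assumes "CHAR('a) = 0" "c \<noteq> 0"
    and "[:-c, 1:] ^ Suc k dvd q" "[:-c, 1:] ^ Suc k dvd sq_pderiv q"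
  shows "[:-c, 1:] ^ Suc (Suc k) dvd q"
proof -
  let ?L = "[:-c, 1:]"
  obtain r where r: "q = ?L ^ Suc k * r"
    using assms(3) by (elim dvdE)
  have "sq_pderiv q = ?L ^ Suc k * sq_pderiv r + ?L ^ k * (monom 1 2 * smult (of_nat (Suc k)) r)"
    unfolding r sq_pderiv_def pderiv_mult pderiv_power_Suc by (simp add: pderiv_pCons algebra_simps)
  with assms(4) have "?L ^ k * ?L dvd ?L ^ k * (monom 1 2 * smult (of_nat (Suc k)) r)"
    by (simp add: dvd_add_right_iff mult.commute)
  moreover have "?L ^ k \<noteq> 0" by simp
  ultimately have "?L dvd monom 1 2 * smult (of_nat (Suc k)) r"
    using dvd_mult_cancel_left[of "?L ^ k" ?L] by blast
  moreover have "(of_nat (Suc k) :: 'a) \<noteq> 0"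
    using assms(1) by (simp only: CHAR_eq0_iff) simp
  ultimately have "poly r c = 0"
    using assms(2) by (simp add: poly_eq_0_iff_dvd[symmetric] poly_monom)
  then have "?L dvd r"
    by (simp add: poly_eq_0_iff_dvd)
  then have "?L ^ Suc k * ?L dvd ?L ^ Suc k * r"
    by (rule mult_dvd_mono[OF dvd_refl])
  then show ?thesis
    unfolding r by (simp only: power_Suc2[of ?L "Suc k"])
qed

lemma sq_pderiv_powers_vanish_at_imp_zero:
  fixes b :: "'a::idom poly"
  assumes "CHAR('a) = 0" "c \<noteq> 0" and vanish: "\<And>n. poly ((sq_pderiv ^^ n) b) c = 0"
  shows "b = 0"
proof (rule ccontr)
  assume "b \<noteq> 0"
  have "\<forall>n. [:-c, 1:] ^ Suc k dvd (sq_pderiv ^^ n) b" for k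
  proof (induction k)
    case 0
    then show ?case using vanish by (simp add: poly_eq_0_iff_dvd)
  next
    case (Suc k)
    show ?case
    proof
      fix n
      have "[:-c, 1:] ^ Suc k dvd (sq_pderiv ^^ n) b"
        "[:-c, 1:] ^ Suc k dvd sq_pderiv ((sq_pderiv ^^ n) b)"
        using Suc.IH[rule_format, of n] Suc.IH[rule_format, of "Suc n"] by simp_all
      then show "[:-c, 1:] ^ Suc (Suc k) dvd (sq_pderiv ^^ n) b"
        by (rule linear_power_Suc_dvd_if_dvd_sq_pderiv[OF assms(1,2)])
    qed
  qed
  then have "[:-c, 1:] ^ Suc (degree b) dvd b"
    using funpow_0 by metis
  then have "degree ([:-c, 1:] ^ Suc (degree b)) \<le> degree b"
    using \<open>b \<noteq> 0\<close> by (rule dvd_imp_degree_le)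
  then show False
    by (simp only: degree_linear_power)
qed

lemma coeff_0_tau_tens_monom:
  "coeff (tau (tens b (monom 1 n))) 0 = (sq_pderiv ^^ n) (b :: 'a::field poly)"
proof -
  have "coeff (tau (tens b (monom 1 n))) 0 =
      (\<Sum>k\<le>n. smult (coeff (hasse_pderiv k (monom 1 n)) 0) ((sq_pderiv ^^ k) b))"
    by (simp add: tau_tens degree_monom_eq coeff_sum coeff_tens)
  also have "\<dots> = (\<Sum>k\<le>n. if k = n then (sq_pderiv ^^ k) b else 0)"
    by (rule sum.cong) (auto simp: hasse_pderiv_monom)
  finally show ?thesis by simp
qed

lemma tau_not_continuous_at_0_if_CHAR_0:
  assumes "CHAR('a) = 0"
  obtains U :: "'a::field poly poly set"
  where "cofinite_bang_open U" "\<And>V. cofinite_bang_open V \<Longrightarrow> \<not> tau ` V \<subseteq> U"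
proof
  let ?U = "{t :: 'a poly poly. poly (coeff t 0) 1 = 0}"
  show "cofinite_bang_open ?U"
    unfolding cofinite_bang_open_iff
    by (intro conjI exI[of _ "[:0, 1:]"] exI[of _ "[:-1, 1:]"] allI)
      (simp_all add: ksub_def tsc_def coeff_tens)
  fix V :: "'a poly poly set"
  assume "cofinite_bang_open V"
  then obtain f where f: "f \<noteq> 0" "\<forall>h q. tens (f * h) q \<in> V"
    unfolding cofinite_bang_open_iff by blast
  show "\<not> tau ` V \<subseteq> ?U"
  proof
    assume "tau ` V \<subseteq> ?U"
    then have "poly ((sq_pderiv ^^ n) f) 1 = 0" for n
      using f(2)[rule_format, of 1 "monom 1 n"] by (auto simp: coeff_0_tau_tens_monom)
    then show False
      using sq_pderiv_powers_vanish_at_imp_zero[OF assms, of 1 f] f(1) by simp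
  qed
qed

theorem lemma5p2:
  shows "continuous_map
           (linear_topology (bang_open cofinite_open cofinite_open))
           (linear_topology (bang_open cofinite_open cofinite_open))
           (tau :: 'a::field poly poly \<Rightarrow> 'a poly poly)
         \<longleftrightarrow> CHAR('a) > 0"
proof -
  have "0 \<in> U \<and> (\<forall>u\<in>U. \<forall>v\<in>U. u + v \<in> U)" if "cofinite_bang_open U" for U :: "'a poly poly set"
    using that unfolding cofinite_bang_open_iff ksub_def by blast
  then have "continuous_map (linear_topology cofinite_bang_open) (linear_topology cofinite_bang_open)
        (tau :: 'a poly poly \<Rightarrow> 'a poly poly) \<longleftrightarrow>
      (\<forall>U. cofinite_bang_open U \<longrightarrow> (\<exists>V. cofinite_bang_open V \<and> tau ` V \<subseteq> (U :: 'a poly poly set)))"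
    by (intro continuous_map_linear_topology_iff[where A = UNIV and B = UNIV] additive_tau
        cofinite_bang_open_Int cofinite_bang_open_UNIV)
  also have "\<dots> \<longleftrightarrow> CHAR('a) > 0"
    using tau_continuous_at_0_if_CHAR_pos tau_not_continuous_at_0_if_CHAR_0 by (metis neq0_conv)
  finally show ?thesis .
qed

end
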